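(* Let $D,p\ge1$ be integers, let $r_1,\dots,r_p,s_1,\dots,s_p,t_1,\dots,t_p\ge0$ be integers, and let $0=d_0<d_1<\cdots<d_p=D$ be integers. Put $A_j=d_j-d_{j-1}$ for $j=1,\dots,p$. For every complex $z$ with $|z|>1$, $$\int_{[0,1]^D}\prod_{j=1}^p\frac{\prod_{\ell=d_{j-1}+1}^{d_j}x_\ell^{r_j}(1-x_\ell)^{s_j}}{(z-x_1\cdots x_{d_j})^{t_j+1}}\,\mathrm{d}x_1\cdots\mathrm{d}x_D = z^{-(t_1+\cdots+t_p+p-1)}\prod_{j=1}^p\frac{s_j!^{A_j}}{t_j!}\sum_{k_1\ge\cdots\ge k_p\ge1}z^{-k_1}\prod_{j=1}^p\frac{(k_j-k_{j+1}+1)_{t_j}}{(k_j+r_j)_{s_j+1}^{A_j}},$$ where $k_{p+1}=1$. The series on the right has depth $p$ and weight $D$.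
   Context: $(\alpha)_m=\alpha(\alpha+1)\cdots(\alpha+m-1)$ is the Pochhammer symbol, with $(\alpha)_0=1$. *)

theory Defs
  imports "HOL-Analysis.Analysis"
begin

definition desc_tuples :: "nat \<Rightarrow> (nat \<Rightarrow> nat) set" where
  "desc_tuples p = {k. (\<forall>j. j \<notin> {1..p} \<longrightarrow> k j = 0) \<and> (\<forall>j\<in>{1..p}. 1 \<le> k j)
                      \<and> (\<forall>j\<in>{1..<p}. k (Suc j) \<le> k j)}"

definition knext :: "nat \<Rightarrow> (nat \<Rightarrow> nat) \<Rightarrow> nat \<Rightarrow> nat" where
  "knext p k j = (if j = p then 1 else k (Suc j))"

end

(*
  Put y_j = x_1 ... x_(d_j), so 0 <= y_j <= 1 < |z| on the cube. Each factor of the integrand expands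
  as a negative binomial series (z - y_j)^(-(t_j+1)) = sum_n C(n + t_j, t_j) y_j^n z^(-(n+t_j+1)), so the
  integrand is a sum over gap vectors (n_1, ..., n_p). In the term of index n, a variable x_l of the
  j-th block {d_(j-1)+1..d_j} occurs in y_j, ..., y_p and hence with exponent r_j + k_j - 1, where
  k_j = 1 + n_j + ... + n_p; the map n -> k is a bijection onto the tuples k_1 >= ... >= k_p >= 1,
  inverted by n_j = k_j - k_(j+1). Every term is bounded on the cube by its coefficient, and the
  coefficients form the absolutely convergent product series at y_j = 1, so the expansion may be
  integrated term by term. Each term then factors into Beta integrals
  int_0^1 x^(k+r-1) (1-x)^s dx = s! / (k+r)_(s+1).
*)

theory Submission
  imports Defs "HOL-Probability.Infinite_Product_Measure"
begin

lemma pochhammer_Suc_div_fact: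
  "pochhammer (of_nat (n + 1)) t / fact t = (of_nat ((n + t) choose t) :: 'a :: field_char_0)"
  by (simp add: binomial_gbinomial gbinomial_pochhammer' algebra_simps)

lemma neg_binomial_sums:
  fixes w :: complex
  assumes "norm w < 1"
  shows "(\<lambda>n. of_nat ((n + t) choose t) * w ^ n) sums inverse ((1 - w) ^ (t + 1))"
proof -
  have "(\<lambda>n. ((- of_nat (t + 1)) gchoose n) * (- w) ^ n) sums (1 + - w) powr (- of_nat (t + 1))"
    by (rule gen_binomial_complex) (use assms in simp)
  moreover have "((- of_nat (t + 1)) gchoose n) * (- w) ^ n = of_nat ((n + t) choose t) * w ^ n" for n
  proof -
    have "((- of_nat (t + 1) :: complex) gchoose n) = (- 1) ^ n * of_nat ((n + t) choose n)"
      by (subst gbinomial_minus) (simp add: binomial_gbinomial add_ac)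
    then show ?thesis
      by (simp add: binomial_symmetric[of t "n + t", simplified] power_minus[of w] mult_ac)
  qed
  moreover have "(1 + - w) powr (- of_nat (t + 1)) = inverse ((1 - w) ^ (t + 1))"
    by (simp add: powr_minus powr_nat' del: of_nat_Suc)
  ultimately show ?thesis by simp
qed

lemma neg_binomial_has_sum:
  fixes w :: complex
  assumes "norm w < 1"
  shows "((\<lambda>n. of_nat ((n + t) choose t) * w ^ n) has_sum inverse ((1 - w) ^ (t + 1))) UNIV"
    and "(\<lambda>n. norm (of_nat ((n + t) choose t) * w ^ n)) summable_on UNIV"
proof -
  have norm_eq: "norm (of_nat ((n + t) choose t) * w ^ n) = of_nat ((n + t) choose t) * norm w ^ n" for n
    by (simp add: norm_mult norm_power)
  have "summable (\<lambda>n. of_nat ((n + t) choose t) * complex_of_real (norm w) ^ n)"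
    using neg_binomial_sums[of "of_real (norm w)" t] assms by (simp add: sums_iff)
  then have summable: "summable (\<lambda>n. norm (of_nat ((n + t) choose t) * w ^ n))"
    unfolding norm_eq by (simp flip: summable_complex_of_real)
  then show "(\<lambda>n. norm (of_nat ((n + t) choose t) * w ^ n)) summable_on UNIV"
    by (simp add: summable_on_UNIV_nonneg_real_iff)
  show "((\<lambda>n. of_nat ((n + t) choose t) * w ^ n) has_sum inverse ((1 - w) ^ (t + 1))) UNIV"
    by (rule norm_summable_imp_has_sum[OF summable neg_binomial_sums[OF assms]])
qed

lemma has_sum_prod_PiE:
  fixes f :: "'a \<Rightarrow> 'b \<Rightarrow> 'c::{real_normed_field,banach,second_countable_topology}"
  assumes "finite A" and "\<And>x. x \<in> A \<Longrightarrow> countable (B x)"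
    and has_sum: "\<And>x. x \<in> A \<Longrightarrow> (f x has_sum S x) (B x)"
    and abs_summable: "\<And>x. x \<in> A \<Longrightarrow> (\<lambda>y. norm (f x y)) summable_on B x"
  shows "((\<lambda>g. \<Prod>x\<in>A. f x (g x)) has_sum (\<Prod>x\<in>A. S x)) (PiE A B)"
    and "(\<lambda>g. norm (\<Prod>x\<in>A. f x (g x))) summable_on PiE A B"
proof -
  have "Infinite_Set_Sum.abs_summable_on (\<lambda>g. \<Prod>x\<in>A. f x (g x)) (PiE A B)"
    using assms(1,2) abs_summable
    by (intro abs_summable_on_prod_PiE) (auto simp: abs_summable_equivalent[symmetric])
  then show norm_summable: "(\<lambda>g. norm (\<Prod>x\<in>A. f x (g x))) summable_on PiE A B"
    by (simp add: abs_summable_equivalent)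
  have "infsum (\<lambda>g. \<Prod>x\<in>A. f x (g x)) (PiE A B) = (\<Prod>x\<in>A. infsum (f x) (B x))"
    using assms(1) abs_summable by (rule infsum_prod_PiE_abs)
  also have "\<dots> = (\<Prod>x\<in>A. S x)"
    using has_sum by (intro prod.cong refl infsumI)
  finally show "((\<lambda>g. \<Prod>x\<in>A. f x (g x)) has_sum (\<Prod>x\<in>A. S x)) (PiE A B)"
    using abs_summable_summable[OF norm_summable] by (metis has_sum_infsum)
qed

lemma neg_binomial_prod_has_sum:
  fixes w :: "'a \<Rightarrow> complex" and t :: "'a \<Rightarrow> nat"
  assumes "finite A" and "\<And>j. j \<in> A \<Longrightarrow> norm (w j) < 1"
  shows "((\<lambda>n. \<Prod>j\<in>A. of_nat ((n j + t j) choose t j) * w j ^ n j)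
            has_sum (\<Prod>j\<in>A. inverse ((1 - w j) ^ (t j + 1)))) (PiE A (\<lambda>_. UNIV))"
    and "(\<lambda>n. norm (\<Prod>j\<in>A. of_nat ((n j + t j) choose t j) * w j ^ n j))
            summable_on PiE A (\<lambda>_. UNIV)"
  using has_sum_prod_PiE[OF assms(1), of "\<lambda>_. UNIV" "\<lambda>j n. of_nat ((n + t j) choose t j) * w j ^ n"
      "\<lambda>j. inverse ((1 - w j) ^ (t j + 1))"] neg_binomial_has_sum assms(2)
  by blast+

lemma has_sum_integral:
  fixes f :: "'i \<Rightarrow> 'a \<Rightarrow> 'b::{banach, second_countable_topology}"
  assumes "countable I" and "infinite I"
    and integrable: "\<And>i. i \<in> I \<Longrightarrow> integrable M (f i)"
    and has_sum: "\<And>x. x \<in> space M \<Longrightarrow> ((\<lambda>i. f i x) has_sum F x) I"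
    and abs_summable: "\<And>x. x \<in> space M \<Longrightarrow> (\<lambda>i. norm (f i x)) summable_on I"
    and integral_norm_summable: "(\<lambda>i. \<integral>x. norm (f i x) \<partial>M) summable_on I"
  shows "((\<lambda>i. integral\<^sup>L M (f i)) has_sum integral\<^sup>L M F) I"
proof -
  obtain e :: "nat \<Rightarrow> 'i" where e: "bij_betw e UNIV I"
    using countable_infiniteE' assms(1,2) by blast
  have eI: "e n \<in> I" for n
    using e by (auto simp: bij_betw_def)
  have summable_nat: "summable (\<lambda>n. g (e n))" if "g summable_on I" "\<And>i. 0 \<le> g i" for g :: "'i \<Rightarrow> real"
    using that summable_on_reindex_bij_betw[OF e, of g] summable_on_UNIV_nonneg_real_iff by auto
  have integral_norm_nat: "summable (\<lambda>n. \<integral>x. norm (f (e n) x) \<partial>M)"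
    by (rule summable_nat[OF integral_norm_summable]) simp
  have "(\<lambda>n. integral\<^sup>L M (f (e n))) sums (\<integral>x. (\<Sum>n. f (e n) x) \<partial>M)"
    by (rule sums_integral) (use integrable eI integral_norm_nat summable_nat[OF abs_summable] in auto)
  also have "(\<integral>x. (\<Sum>n. f (e n) x) \<partial>M) = integral\<^sup>L M F"
  proof (rule Bochner_Integration.integral_cong [OF refl])
    fix x assume "x \<in> space M"
    then have "((\<lambda>n. f (e n) x) has_sum F x) UNIV"
      using has_sum_reindex_bij_betw[OF e, of "\<lambda>i. f i x"] has_sum by simp
    then show "(\<Sum>n. f (e n) x) = F x"
      by (intro sums_unique[symmetric] has_sum_imp_sums)
  qed
  finally have sums: "(\<lambda>n. integral\<^sup>L M (f (e n))) sums integral\<^sup>L M F" .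
  have "summable (\<lambda>n. norm (integral\<^sup>L M (f (e n))))"
    by (rule summable_comparison_test'[OF integral_norm_nat]) simp
  then have "((\<lambda>n. integral\<^sup>L M (f (e n))) has_sum integral\<^sup>L M F) UNIV"
    using sums by (rule norm_summable_imp_has_sum)
  then show ?thesis
    using has_sum_reindex_bij_betw[OF e] by blast
qed

lemma mono_on_atLeastAtMost_if_le_Suc:
  fixes d :: "nat \<Rightarrow> 'a::order"
  assumes "\<And>j. j < p \<Longrightarrow> d j \<le> d (Suc j)"
  shows "mono_on {0..p} d"
proof (rule mono_onI)
  fix i j assume "i \<in> {0..p}" "j \<in> {0..p}" "i \<le> j"
  then have "i \<le> j" "j \<le> p" by auto
  then show "d i \<le> d j"
  proof (induction rule: dec_induct)
    case (step n)
    then show ?case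
      using assms[of n] by simp
  qed simp
qed

lemma prod_atLeastAtMost_blocks:
  fixes d :: "nat \<Rightarrow> nat"
  assumes "d 0 = 0" and "mono_on {0..p} d" and "j \<le> p"
  shows "(\<Prod>l\<in>{1..d j}. h l) = (\<Prod>i\<in>{1..j}. \<Prod>l\<in>{d (i - 1) + 1..d i}. h l)"
  using \<open>j \<le> p\<close>
proof (induction j)
  case (Suc j)
  have "d j \<le> d (Suc j)"
    using Suc.prems by (auto intro: mono_onD[OF assms(2)])
  then have "(\<Prod>l\<in>{1..d (Suc j)}. h l) = (\<Prod>l\<in>{1..d j}. h l) * (\<Prod>l\<in>{d j + 1..d (Suc j)}. h l)"
    using prod.ub_add_nat[of 1 "d j" h "d (Suc j) - d j"] by simp
  with Suc show ?case
    by simp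
qed (simp add: assms(1))

lemma prod_power_prefix_prods:
  fixes B :: "nat \<Rightarrow> 'a::comm_semiring_1"
  shows "(\<Prod>j\<in>{1..p}. (\<Prod>i\<in>{1..j}. B i) ^ n j) = (\<Prod>i\<in>{1..p}. B i ^ (\<Sum>j\<in>{i..p}. n j))"
proof (induction p)
  case (Suc p)
  have "(\<Prod>i\<in>{1..Suc p}. B i ^ (\<Sum>j\<in>{i..Suc p}. n j))
      = (\<Prod>i\<in>{1..Suc p}. B i ^ (\<Sum>j\<in>{i..p}. n j) * B i ^ n (Suc p))"
    by (intro prod.cong refl) (simp add: power_add)
  also have "\<dots> = (\<Prod>i\<in>{1..p}. B i ^ (\<Sum>j\<in>{i..p}. n j)) * (\<Prod>i\<in>{1..Suc p}. B i) ^ n (Suc p)"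
    by (simp add: prod.distrib prod_power_distrib power_mult_distrib)
  also have "\<dots> = (\<Prod>j\<in>{1..Suc p}. (\<Prod>i\<in>{1..j}. B i) ^ n j)"
    by (simp only: Suc.IH prod.cl_ivl_Suc) simp
  finally show ?case ..
qed simp

lemma prod_blocks_prefix_powers:
  fixes x :: "nat \<Rightarrow> 'a::comm_semiring_1" and d :: "nat \<Rightarrow> nat"
  assumes "d 0 = 0" and "mono_on {0..p} d"
  shows "(\<Prod>j\<in>{1..p}. (\<Prod>l\<in>{d (j - 1) + 1..d j}. g j l) * (\<Prod>l\<in>{1..d j}. x l) ^ n j)
       = (\<Prod>j\<in>{1..p}. \<Prod>l\<in>{d (j - 1) + 1..d j}. g j l * x l ^ (\<Sum>i\<in>{j..p}. n i))"
proof -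
  define B where "B i = (\<Prod>l\<in>{d (i - 1) + 1..d i}. x l)" for i
  have "(\<Prod>j\<in>{1..p}. (\<Prod>l\<in>{1..d j}. x l) ^ n j) = (\<Prod>j\<in>{1..p}. (\<Prod>i\<in>{1..j}. B i) ^ n j)"
  proof (intro prod.cong refl)
    fix j assume "j \<in> {1..p}"
    then show "(\<Prod>l\<in>{1..d j}. x l) ^ n j = (\<Prod>i\<in>{1..j}. B i) ^ n j"
      using prod_atLeastAtMost_blocks[OF assms, of j x] by (simp add: B_def)
  qed
  also have "\<dots> = (\<Prod>j\<in>{1..p}. B j ^ (\<Sum>i\<in>{j..p}. n i))"
    by (rule prod_power_prefix_prods)
  also have "\<dots> = (\<Prod>j\<in>{1..p}. \<Prod>l\<in>{d (j - 1) + 1..d j}. x l ^ (\<Sum>i\<in>{j..p}. n i))"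
    by (simp only: B_def prod_power_distrib)
  finally have powers: "(\<Prod>j\<in>{1..p}. (\<Prod>l\<in>{1..d j}. x l) ^ n j)
      = (\<Prod>j\<in>{1..p}. \<Prod>l\<in>{d (j - 1) + 1..d j}. x l ^ (\<Sum>i\<in>{j..p}. n i))" .
  show ?thesis
    unfolding prod.distrib powers ..
qed

lemma
  fixes M :: "'a measure" and d :: "nat \<Rightarrow> nat"
    and f :: "nat \<Rightarrow> 'a \<Rightarrow> 'b::{real_normed_field,banach,second_countable_topology}"
  assumes "sigma_finite_measure M" and "d 0 = 0" and "mono_on {0..p} d"
    and integrable: "\<And>j. j \<in> {1..p} \<Longrightarrow> integrable M (f j)"
  shows integrable_prod_blocks:
      "integrable (PiM {1..d p} (\<lambda>_. M)) (\<lambda>x. \<Prod>j\<in>{1..p}. \<Prod>l\<in>{d (j - 1) + 1..d j}. f j (x l))"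
    and integral_prod_blocks:
      "(\<integral>x. (\<Prod>j\<in>{1..p}. \<Prod>l\<in>{d (j - 1) + 1..d j}. f j (x l)) \<partial>PiM {1..d p} (\<lambda>_. M))
       = (\<Prod>j\<in>{1..p}. integral\<^sup>L M (f j) ^ (d j - d (j - 1)))"
proof -
  interpret product_sigma_finite "\<lambda>_. M"
    using assms(1) by (simp add: product_sigma_finite_def)
  define b where "b l = (LEAST j. l \<le> d j)" for l
  have b_block: "b l = j" if "j \<in> {1..p}" "l \<in> {d (j - 1) + 1..d j}" for j l
    unfolding b_def
  proof (rule Least_equality)
    show "l \<le> d j" using that by simp
    show "j \<le> i" if "l \<le> d i" for i
    proof (rule ccontr)
      assume "\<not> j \<le> i"
      then have "d i \<le> d (j - 1)"
        using \<open>j \<in> {1..p}\<close> by (auto intro: mono_onD[OF assms(3)])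
      with \<open>l \<le> d i\<close> \<open>l \<in> {d (j - 1) + 1..d j}\<close> show False by simp
    qed
  qed
  have b_range: "b l \<in> {1..p}" if "l \<in> {1..d p}" for l
  proof -
    have "l \<le> d (b l)" "b l \<le> p"
      using that unfolding b_def by (auto intro: LeastI Least_le)
    with that assms(2) show ?thesis by (cases "b l") auto
  qed
  have blocks: "(\<Prod>j\<in>{1..p}. \<Prod>l\<in>{d (j - 1) + 1..d j}. h j l) = (\<Prod>l\<in>{1..d p}. h (b l) l)"
    for h :: "nat \<Rightarrow> nat \<Rightarrow> 'b"
    unfolding prod_atLeastAtMost_blocks[OF assms(2,3) order.refl]
    by (intro prod.cong refl) (simp add: b_block)
  have integrable': "\<And>l. l \<in> {1..d p} \<Longrightarrow> integrable M (f (b l))"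
    using integrable b_range by blast
  show "integrable (PiM {1..d p} (\<lambda>_. M)) (\<lambda>x. \<Prod>j\<in>{1..p}. \<Prod>l\<in>{d (j - 1) + 1..d j}. f j (x l))"
    unfolding blocks by (intro product_integrable_prod integrable') auto
  have "(\<integral>x. (\<Prod>j\<in>{1..p}. \<Prod>l\<in>{d (j - 1) + 1..d j}. f j (x l)) \<partial>PiM {1..d p} (\<lambda>_. M))
      = (\<Prod>l\<in>{1..d p}. integral\<^sup>L M (f (b l)))"
    unfolding blocks by (intro product_integral_prod integrable') auto
  also have "\<dots> = (\<Prod>j\<in>{1..p}. integral\<^sup>L M (f j) ^ (d j - d (j - 1)))"
    unfolding blocks[of "\<lambda>j l. integral\<^sup>L M (f j)", symmetric] by simp
  finally show "(\<integral>x. (\<Prod>j\<in>{1..p}. \<Prod>l\<in>{d (j - 1) + 1..d j}. f j (x l)) \<partial>PiM {1..d p} (\<lambda>_. M))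
       = (\<Prod>j\<in>{1..p}. integral\<^sup>L M (f j) ^ (d j - d (j - 1)))" .
qed

abbreviation unit_interval :: "real measure" where
  "unit_interval \<equiv> restrict_space lborel {0..1}"

lemma prob_space_unit_interval: "prob_space unit_interval"
  by (rule prob_space_restrict_space) auto

lemma integrable_power_mult_one_minus_power:
  "integrable (unit_interval) (\<lambda>x. x ^ a * (1 - x) ^ b)"
proof -
  interpret prob_space "unit_interval"
    by (rule prob_space_unit_interval)
  show ?thesis
  proof (rule integrable_const_bound[where B = 1])
    show "AE x in unit_interval. norm (x ^ a * (1 - x) ^ b) \<le> 1"
    proof (rule AE_I2)
      fix x :: real assume "x \<in> space (unit_interval)"
      then have "0 \<le> x" "x \<le> 1"
        by (auto simp: space_restrict_space)
      then show "norm (x ^ a * (1 - x) ^ b) \<le> 1"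
        by (simp add: abs_mult mult_le_one power_le_one)
    qed
  qed (intro measurable_restrict_space1, measurable)
qed

lemma integral_power_mult_one_minus_power:
  "(\<integral>x. x ^ a * (1 - x) ^ b \<partial>unit_interval)
   = fact b / pochhammer (of_nat (a + 1)) (b + 1)"
proof (induction b arbitrary: a)
  case 0
  have "(\<integral>x. x ^ a \<partial>unit_interval) = (\<integral>x. x ^ a * indicator {0..1} x \<partial>lborel)"
    by (subst integral_restrict_space) (auto simp: mult.commute)
  then show ?case
    by (simp add: integral_power)
next
  case (Suc b)
  define P1 where "P1 = pochhammer (of_nat (a + 1) :: real) (b + 1)"
  define P2 where "P2 = pochhammer (of_nat (a + 2) :: real) (b + 1)"
  define Q where "Q = pochhammer (of_nat (a + 1) :: real) (Suc b + 1)"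
  have Q: "Q = P1 * (of_nat a + of_nat b + 2)" "Q = (of_nat a + 1) * P2"
    unfolding P1_def P2_def Q_def
    using pochhammer_Suc[of "of_nat (a + 1) :: real" "b + 1"] pochhammer_rec[of "of_nat (a + 1) :: real" "b + 1"]
    by (simp_all add: algebra_simps)
  have "P1 > 0" "P2 > 0"
    unfolding P1_def P2_def by (simp_all add: pochhammer_pos)
  have split: "(\<lambda>x::real. x ^ a * (1 - x) ^ Suc b) = (\<lambda>x. x ^ a * (1 - x) ^ b - x ^ Suc a * (1 - x) ^ b)"
    by (auto simp: fun_eq_iff algebra_simps)
  have "(\<integral>x. x ^ a * (1 - x) ^ Suc b \<partial>unit_interval) = fact b / P1 - fact b / P2"
    unfolding split Bochner_Integration.integral_diff[OF integrable_power_mult_one_minus_power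
        integrable_power_mult_one_minus_power] Suc.IH P1_def P2_def by simp
  also have "\<dots> = (fact b * (of_nat a + of_nat b + 2) - fact b * (of_nat a + 1)) / Q"
  proof -
    have "fact b / P1 = fact b * (of_nat a + of_nat b + 2) / Q"
      using Q(1) \<open>P1 > 0\<close> by simp
    moreover have "fact b / P2 = fact b * (of_nat a + 1) / Q"
      using Q(2) \<open>P2 > 0\<close> by simp
    ultimately show ?thesis
      by (simp add: diff_divide_distrib)
  qed
  also have "\<dots> = fact (Suc b) / Q"
    by (simp add: algebra_simps)
  finally show ?case
    unfolding Q_def .
qed

definition tuple_of_gaps :: "nat \<Rightarrow> (nat \<Rightarrow> nat) \<Rightarrow> nat \<Rightarrow> nat" where
  "tuple_of_gaps p n j = (if j \<in> {1..p} then 1 + (\<Sum>i\<in>{j..p}. n i) else 0)"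

lemma tuple_of_gaps_in_desc_tuples: "tuple_of_gaps p n \<in> desc_tuples p"
  unfolding desc_tuples_def tuple_of_gaps_def by (auto intro!: sum_mono2)

lemma tuple_of_gaps_minus_knext:
  assumes "j \<in> {1..p}"
  shows "tuple_of_gaps p n j - knext p (tuple_of_gaps p n) j = n j"
proof (cases "j = p")
  case False
  then have "(\<Sum>i\<in>{j..p}. n i) = n j + (\<Sum>i\<in>{Suc j..p}. n i)"
    using assms by (intro sum.atLeast_Suc_atMost) auto
  with assms False show ?thesis
    by (simp add: tuple_of_gaps_def knext_def)
qed (use assms in \<open>simp add: tuple_of_gaps_def knext_def\<close>)

lemma sum_gaps_desc_tuple:
  assumes "k \<in> desc_tuples p" and "j \<in> {1..p}"
  shows "1 + (\<Sum>i\<in>{j..p}. k i - knext p k i) = k j"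
proof -
  have "j \<le> p" using assms(2) by simp
  then show ?thesis
  proof (induction j rule: inc_induct)
    case base
    have "1 \<le> k p"
      using assms by (auto simp: desc_tuples_def)
    then show ?case
      by (simp add: knext_def)
  next
    case (step m)
    have "1 \<le> m" using assms(2) step.hyps(1) by simp
    then have "k (Suc m) \<le> k m" "1 \<le> k (Suc m)"
      using assms(1) step.hyps(2) by (auto simp: desc_tuples_def)
    moreover have "(\<Sum>i\<in>{m..p}. k i - knext p k i) = (k m - knext p k m) + (\<Sum>i\<in>{Suc m..p}. k i - knext p k i)"
      using step.hyps(2) by (intro sum.atLeast_Suc_atMost) auto
    ultimately show ?case
      using step.IH step.hyps(2) by (simp add: knext_def)
  qed
qed

lemma bij_betw_tuple_of_gaps: "bij_betw (tuple_of_gaps p) (PiE {1..p} (\<lambda>_. UNIV)) (desc_tuples p)"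
proof (rule bij_betwI[where g = "\<lambda>k. restrict (\<lambda>j. k j - knext p k j) {1..p}"])
  show "tuple_of_gaps p \<in> PiE {1..p} (\<lambda>_. UNIV) \<rightarrow> desc_tuples p"
    using tuple_of_gaps_in_desc_tuples by blast
  show "(\<lambda>k. restrict (\<lambda>j. k j - knext p k j) {1..p}) \<in> desc_tuples p \<rightarrow> PiE {1..p} (\<lambda>_. UNIV)"
    by simp
  show "restrict (\<lambda>j. tuple_of_gaps p n j - knext p (tuple_of_gaps p n) j) {1..p} = n"
    if "n \<in> PiE {1..p} (\<lambda>_. UNIV)" for n
    using that by (auto simp: tuple_of_gaps_minus_knext PiE_def extensional_def fun_eq_iff)
  show "tuple_of_gaps p (restrict (\<lambda>j. k j - knext p k j) {1..p}) = k"
    if "k \<in> desc_tuples p" for k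
    using that sum_gaps_desc_tuple[OF that] by (auto simp: tuple_of_gaps_def desc_tuples_def fun_eq_iff)
qed

locale block_integral =
  fixes p :: nat and r s t d :: "nat \<Rightarrow> nat" and z :: complex
  assumes p_pos: "1 \<le> p" and d_0: "d 0 = 0" and d_mono: "mono_on {0..p} d" and z_gt_1: "1 < norm z"
begin

abbreviation cube :: "(nat \<Rightarrow> real) measure" where
  "cube \<equiv> PiM {1..d p} (\<lambda>_. unit_interval)"

definition block_integrand :: "(nat \<Rightarrow> real) \<Rightarrow> complex" where
  "block_integrand x = (\<Prod>j\<in>{1..p}.
     (\<Prod>l\<in>{d (j - 1) + 1..d j}. of_real (x l ^ r j * (1 - x l) ^ s j))
     / (z - of_real (\<Prod>l\<in>{1..d j}. x l)) ^ (t j + 1))"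

definition series_term :: "(nat \<Rightarrow> nat) \<Rightarrow> complex" where
  "series_term k = inverse z ^ k 1 *
     (\<Prod>j\<in>{1..p}. pochhammer (of_nat (k j - knext p k j + 1)) (t j)
        / pochhammer (of_nat (k j + r j)) (s j + 1) ^ (d j - d (j - 1)))"

definition prefactor :: complex where
  "prefactor = inverse z ^ (sum t {1..p} + p - 1) * (\<Prod>j\<in>{1..p}. fact (s j) ^ (d j - d (j - 1)) / fact (t j))"

(* Coefficient and monomial of the term of index n in the product of the expansions of the
   factors (z - y_j)^(-(t_j+1)); the factor y_j^(n_j) has been distributed over the blocks i <= j. *)
definition expansion_coeff :: "(nat \<Rightarrow> nat) \<Rightarrow> complex" where
  "expansion_coeff n = (\<Prod>j\<in>{1..p}. of_nat ((n j + t j) choose t j) * inverse z ^ (n j + t j + 1))"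

definition expansion_monomial :: "(nat \<Rightarrow> nat) \<Rightarrow> (nat \<Rightarrow> real) \<Rightarrow> real" where
  "expansion_monomial n x =
     (\<Prod>j\<in>{1..p}. \<Prod>l\<in>{d (j - 1) + 1..d j}. x l ^ (r j + (\<Sum>i\<in>{j..p}. n i)) * (1 - x l) ^ s j)"

lemma unit_cube_coordinates:
  assumes "x \<in> space cube" and "j \<in> {1..p}" and "l \<in> {1..d j}"
  shows "0 \<le> x l" and "x l \<le> 1"
proof -
  have "d j \<le> d p"
    using assms(2) by (auto intro: mono_onD[OF d_mono])
  then show "0 \<le> x l" "x l \<le> 1"
    using assms by (auto simp: space_PiM space_restrict_space PiE_def Pi_def)
qed

lemma expansion_monomial_bounds:
  assumes "x \<in> space cube"
  shows "0 \<le> expansion_monomial n x" and "expansion_monomial n x \<le> 1"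
proof -
  have "0 \<le> x l \<and> x l \<le> 1" if "j \<in> {1..p}" "l \<in> {d (j - 1) + 1..d j}" for j l
    using unit_cube_coordinates[OF assms that(1)] that by auto
  then show "0 \<le> expansion_monomial n x" "expansion_monomial n x \<le> 1"
    unfolding expansion_monomial_def by (auto intro!: prod_nonneg prod_le_1 mult_le_one power_le_one)
qed

lemma
  shows integrable_expansion_monomial:
      "integrable cube (expansion_monomial n)"
    and integral_expansion_monomial:
      "integral\<^sup>L cube (expansion_monomial n)
       = (\<Prod>j\<in>{1..p}. (fact (s j) / pochhammer (of_nat (r j + (\<Sum>i\<in>{j..p}. n i) + 1)) (s j + 1))
                        ^ (d j - d (j - 1)))"
proof -
  have sigma_finite: "sigma_finite_measure unit_interval"
    using prob_space_unit_interval by (simp add: prob_space_imp_sigma_finite)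
  show "integrable cube (expansion_monomial n)"
    unfolding expansion_monomial_def
    by (rule integrable_prod_blocks[OF sigma_finite d_0 d_mono integrable_power_mult_one_minus_power])
  show "integral\<^sup>L cube (expansion_monomial n)
       = (\<Prod>j\<in>{1..p}. (fact (s j) / pochhammer (of_nat (r j + (\<Sum>i\<in>{j..p}. n i) + 1)) (s j + 1))
                        ^ (d j - d (j - 1)))"
    unfolding expansion_monomial_def integral_prod_blocks[OF sigma_finite d_0 d_mono integrable_power_mult_one_minus_power]
      integral_power_mult_one_minus_power ..
qed

lemma has_sum_block_integrand:
  assumes x: "x \<in> space cube"
  shows "((\<lambda>n. expansion_coeff n * of_real (expansion_monomial n x))
           has_sum block_integrand x) (PiE {1..p} (\<lambda>_. UNIV))"
proof -
  define y where "y j = (\<Prod>l\<in>{1..d j}. x l)" for j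
  define w where "w j = of_real (y j) / z" for j
  define Q where "Q j = (\<Prod>l\<in>{d (j - 1) + 1..d j}. x l ^ r j * (1 - x l) ^ s j)" for j
  define L where "L = (\<Prod>j\<in>{1..p}. of_real (Q j) * inverse z ^ (t j + 1))"
  have "z \<noteq> 0"
    using z_gt_1 by auto
  have y_bounds: "0 \<le> y j" "y j \<le> 1" if "j \<in> {1..p}" for j
    using unit_cube_coordinates[OF x that] unfolding y_def
    by (auto intro!: prod_nonneg prod_le_1)
  have w_lt_1: "norm (w j) < 1" if "j \<in> {1..p}" for j
  proof -
    have "norm (w j) = y j / norm z"
      using y_bounds[OF that] by (simp add: w_def norm_divide)
    also have "\<dots> < 1"
      using y_bounds[OF that] z_gt_1 by (simp add: divide_less_eq)
    finally show ?thesis .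
  qed
  have "((\<lambda>n. L * (\<Prod>j\<in>{1..p}. of_nat ((n j + t j) choose t j) * w j ^ n j))
          has_sum L * (\<Prod>j\<in>{1..p}. inverse ((1 - w j) ^ (t j + 1)))) (PiE {1..p} (\<lambda>_. UNIV))"
    by (intro has_sum_cmult_right neg_binomial_prod_has_sum) (auto simp: w_lt_1)
  moreover have "L * (\<Prod>j\<in>{1..p}. inverse ((1 - w j) ^ (t j + 1))) = block_integrand x"
    unfolding L_def block_integrand_def prod.distrib[symmetric]
  proof (intro prod.cong refl)
    fix j
    have "z - of_real (y j) = z * (1 - w j)"
      using \<open>z \<noteq> 0\<close> by (simp add: w_def algebra_simps)
    then show "of_real (Q j) * inverse z ^ (t j + 1) * inverse ((1 - w j) ^ (t j + 1))
        = (\<Prod>l\<in>{d (j - 1) + 1..d j}. of_real (x l ^ r j * (1 - x l) ^ s j)) / (z - of_real (\<Prod>l\<in>{1..d j}. x l)) ^ (t j + 1)"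
      by (simp add: Q_def y_def power_mult_distrib power_inverse divide_inverse)
  qed
  moreover have "L * (\<Prod>j\<in>{1..p}. of_nat ((n j + t j) choose t j) * w j ^ n j)
      = expansion_coeff n * of_real (expansion_monomial n x)" for n
  proof -
    have "expansion_monomial n x = (\<Prod>j\<in>{1..p}. Q j * y j ^ n j)"
      unfolding expansion_monomial_def Q_def y_def prod_blocks_prefix_powers[OF d_0 d_mono]
      by (simp add: power_add mult_ac)
    then show ?thesis
      unfolding L_def expansion_coeff_def
      by (simp add: w_def prod.distrib[symmetric] power_mult_distrib power_add divide_inverse power_inverse mult_ac)
  qed
  ultimately show ?thesis
    by simp
qed

lemma expansion_coeff_abs_summable:
  "(\<lambda>n. norm (expansion_coeff n)) summable_on PiE {1..p} (\<lambda>_. UNIV)"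
proof -
  have "norm (inverse z) < 1"
    using z_gt_1 by (simp add: norm_inverse inverse_less_1_iff)
  then have "(\<lambda>n. norm (\<Prod>j\<in>{1..p}. of_nat ((n j + t j) choose t j) * inverse z ^ n j))
      summable_on PiE {1..p} (\<lambda>_. UNIV)"
    by (intro neg_binomial_prod_has_sum(2)) auto
  then have "(\<lambda>n. norm (\<Prod>j\<in>{1..p}. inverse z ^ (t j + 1))
      * norm (\<Prod>j\<in>{1..p}. of_nat ((n j + t j) choose t j) * inverse z ^ n j)) summable_on PiE {1..p} (\<lambda>_. UNIV)"
    by (rule summable_on_cmult_right)
  then show ?thesis
    by (simp add: expansion_coeff_def norm_mult[symmetric] prod.distrib[symmetric] power_add mult_ac)
qed

lemma prefactor_nonzero: "prefactor \<noteq> 0"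
  using z_gt_1 by (auto simp: prefactor_def)

lemma expansion_integral_eq_series_term:
  "expansion_coeff n * of_real (integral\<^sup>L cube (expansion_monomial n))
   = prefactor * series_term (tuple_of_gaps p n)"
proof -
  define k where "k = tuple_of_gaps p n"
  have k_j: "k j = 1 + (\<Sum>i\<in>{j..p}. n i)" and gap_j: "k j - knext p k j = n j" if "j \<in> {1..p}" for j
    using that tuple_of_gaps_minus_knext[OF that] by (simp_all add: k_def tuple_of_gaps_def)
  have "(\<Sum>j\<in>{1..p}. n j + t j + 1) = sum t {1..p} + p + sum n {1..p}"
    unfolding sum.distrib by simp
  then have exponents: "(\<Sum>j\<in>{1..p}. n j + t j + 1) = (sum t {1..p} + p - 1) + k 1"
    using p_pos k_j[of 1] by simp
  have "(\<Prod>j\<in>{1..p}. inverse z ^ (n j + t j + 1)) = inverse z ^ (\<Sum>j\<in>{1..p}. n j + t j + 1)"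
    by (rule power_sum[symmetric])
  also have "\<dots> = inverse z ^ (sum t {1..p} + p - 1) * inverse z ^ k 1"
    by (simp only: exponents power_add)
  finally have z_powers: "(\<Prod>j\<in>{1..p}. inverse z ^ (n j + t j + 1))
      = inverse z ^ (sum t {1..p} + p - 1) * inverse z ^ k 1" .
  have "expansion_coeff n * of_real (integral\<^sup>L cube (expansion_monomial n))
      = (\<Prod>j\<in>{1..p}. inverse z ^ (n j + t j + 1) *
           (fact (s j) ^ (d j - d (j - 1)) / fact (t j) *
            (pochhammer (of_nat (k j - knext p k j + 1)) (t j)
              / pochhammer (of_nat (k j + r j)) (s j + 1) ^ (d j - d (j - 1)))))"
    unfolding expansion_coeff_def integral_expansion_monomial of_real_prod prod.distrib[symmetric]
  proof (intro prod.cong refl)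
    fix j assume j: "j \<in> {1..p}"
    have "of_nat ((n j + t j) choose t j) = (pochhammer (of_nat (k j - knext p k j + 1)) (t j) / fact (t j) :: complex)"
      unfolding gap_j[OF j] pochhammer_Suc_div_fact ..
    moreover have "(of_real (fact (s j) / pochhammer (of_nat (r j + (\<Sum>i\<in>{j..p}. n i) + 1)) (s j + 1)) :: complex)
        = fact (s j) / pochhammer (of_nat (k j + r j)) (s j + 1)"
      using k_j[OF j] by (simp flip: pochhammer_of_real add: add_ac)
    ultimately show "of_nat ((n j + t j) choose t j) * inverse z ^ (n j + t j + 1) *
        of_real ((fact (s j) / pochhammer (of_nat (r j + (\<Sum>i\<in>{j..p}. n i) + 1)) (s j + 1)) ^ (d j - d (j - 1)))
      = inverse z ^ (n j + t j + 1) *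
           (fact (s j) ^ (d j - d (j - 1)) / fact (t j) *
            (pochhammer (of_nat (k j - knext p k j + 1)) (t j)
              / pochhammer (of_nat (k j + r j)) (s j + 1) ^ (d j - d (j - 1))))"
      by (simp add: power_divide)
  qed
  also have "\<dots> = prefactor * series_term k"
    unfolding prefactor_def series_term_def prod.distrib z_powers by (simp add: mult_ac)
  finally show ?thesis
    unfolding k_def .
qed

lemma has_sum_series_term:
  "(series_term has_sum integral\<^sup>L cube block_integrand / prefactor) (desc_tuples p)"
proof -
  define f where "f n x = expansion_coeff n * of_real (expansion_monomial n x)" for n x
  interpret cube: prob_space cube
    by (intro prob_space_PiM prob_space_unit_interval)
  have "((\<lambda>n. integral\<^sup>L cube (f n)) has_sum integral\<^sup>L cube block_integrand) (PiE {1..p} (\<lambda>_. UNIV))"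
  proof (rule has_sum_integral)
    show "countable (PiE {1..p} (\<lambda>_. UNIV :: nat set))"
      by (simp add: countable_PiE)
    show "infinite (PiE {1..p} (\<lambda>_. UNIV :: nat set))"
      using p_pos by (auto simp: finite_PiE_iff)
    show "integrable cube (f n)" for n
      unfolding f_def by (intro integrable_mult_right integrable_of_real integrable_expansion_monomial)
    show has_sum: "((\<lambda>n. f n x) has_sum block_integrand x) (PiE {1..p} (\<lambda>_. UNIV))" if "x \<in> space cube" for x
      unfolding f_def by (rule has_sum_block_integrand[OF that])
    show "(\<lambda>n. norm (f n x)) summable_on PiE {1..p} (\<lambda>_. UNIV)" if "x \<in> space cube" for x
      using has_sum[OF that] by (auto simp flip: summable_on_iff_abs_summable_on_complex dest: has_sum_imp_summable)
    have "(\<integral>x. norm (f n x) \<partial>cube) \<le> norm (expansion_coeff n)" for n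
    proof (rule cube.integral_le_const)
      show "AE x in cube. norm (f n x) \<le> norm (expansion_coeff n)"
        using expansion_monomial_bounds by (auto simp: f_def norm_mult intro!: mult_left_le)
    qed (unfold f_def, intro integrable_norm integrable_mult_right integrable_of_real integrable_expansion_monomial)
    then show "(\<lambda>n. \<integral>x. norm (f n x) \<partial>cube) summable_on PiE {1..p} (\<lambda>_. UNIV)"
      by (intro summable_on_comparison_test[OF expansion_coeff_abs_summable]) auto
  qed
  moreover have "integral\<^sup>L cube (f n) = prefactor * series_term (tuple_of_gaps p n)" for n
    unfolding f_def integral_mult_right_zero integral_complex_of_real
    by (rule expansion_integral_eq_series_term)
  ultimately have "((\<lambda>k. prefactor * series_term k) has_sum integral\<^sup>L cube block_integrand) (desc_tuples p)"
    using has_sum_reindex_bij_betw[OF bij_betw_tuple_of_gaps, of "\<lambda>k. prefactor * series_term k"] by simp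
  then show ?thesis
    by (simp add: has_sum_cmult_right_iff prefactor_nonzero)
qed

end

theorem proposition1:
  fixes D p :: nat and r s t d :: "nat \<Rightarrow> nat" and z :: complex
  assumes "D \<ge> 1" and "p \<ge> 1"
    and "d 0 = 0" and "\<forall>j\<in>{1..p}. d (j - 1) < d j" and "d p = D"
    and "norm z > 1"
  shows "(\<lambda>k. inverse z ^ k 1 *
            (\<Prod>j\<in>{1..p}. pochhammer (of_nat (k j - knext p k j + 1)) (t j)
               / pochhammer (of_nat (k j + r j)) (s j + 1) ^ (d j - d (j - 1))))
           summable_on desc_tuples p
       \<and> (LINT x | PiM {1..D} (\<lambda>_. restrict_space lborel {0..1::real}).
            (\<Prod>j\<in>{1..p}.
               (\<Prod>l\<in>{d (j - 1) + 1..d j}. of_real (x l ^ r j * (1 - x l) ^ s j))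
               / (z - of_real (\<Prod>l\<in>{1..d j}. x l)) ^ (t j + 1)))
         = inverse z ^ (sum t {1..p} + p - 1)
           * (\<Prod>j\<in>{1..p}. fact (s j) ^ (d j - d (j - 1)) / fact (t j))
           * (\<Sum>\<^sub>\<infinity>k\<in>desc_tuples p. inverse z ^ k 1 *
               (\<Prod>j\<in>{1..p}. pochhammer (of_nat (k j - knext p k j + 1)) (t j)
                  / pochhammer (of_nat (k j + r j)) (s j + 1) ^ (d j - d (j - 1))))"
proof -
  interpret block_integral p r s t d z
  proof
    show "mono_on {0..p} d"
      using assms(4) by (intro mono_on_atLeastAtMost_if_le_Suc less_imp_le) force
  qed (use assms in auto)
  have "(series_term has_sum integral\<^sup>L (PiM {1..D} (\<lambda>_. unit_interval)) block_integrand / prefactor)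
      (desc_tuples p)"
    using has_sum_series_term \<open>d p = D\<close> by simp
  then have "series_term summable_on desc_tuples p"
    and "integral\<^sup>L (PiM {1..D} (\<lambda>_. unit_interval)) block_integrand = prefactor * infsum series_term (desc_tuples p)"
    using prefactor_nonzero by (auto dest: has_sum_imp_summable infsumI)
  then show ?thesis
    unfolding series_term_def[abs_def] block_integrand_def[abs_def] prefactor_def by blast
qed

end
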